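(* Let $G:[0,\infty)\to\mathbb{C}$ be continuous, let $H_S^{(0)},H_S^{(2)}$ be Hermitian $N\times N$ matrices, $\lambda>0$, and let $W_\lambda(t)=V_\lambda(\lambda^{-2}t)$, where $V_\lambda$ is the $N\times N$ matrix-valued solution of $$\frac{d}{dt}V_\lambda(t)=-\lambda^2\int_0^t ds\,G(t-s)\,e^{i(H_S^{(0)}+\lambda^2H_S^{(2)})(t-s)}V_\lambda(s),\qquad V_\lambda(0)=I.$$ Define the Laplace transforms $\tilde W_\lambda(p)=\int_0^\infty e^{-pt}W_\lambda(t)\,dt$ and $\tilde G(p)=\int_0^\infty e^{-pt}G(t)\,dt$. Then (for $p$ at which the Laplace integrals involved converge) $$\tilde W_\lambda(p)=\Big(p+\tilde G\big(-iH_S^{(0)}+\lambda^2(p-iH_S^{(2)})\big)\Big)^{-1}.$$ Here the matrix function is defined through the Hermitian matrix $H_S=H_S^{(0)}+\lambda^2H_S^{(2)}$: if $H_S=U\,\mathrm{diag}\{E_\alpha\}U^\dagger$ with $U$ unitary, then $$\Big(p+\tilde G(-iH_S+\lambda^2p)\Big)^{-1}=U\,\mathrm{diag}\Big\{\frac{1}{p+\tilde G(-iE_\alpha+\lambda^2p)}\Big\}U^\dagger.$$ *)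

theory Defs
  imports "HOL-Analysis.Analysis"
begin

definition cscale :: "complex \<Rightarrow> complex^'n^'m \<Rightarrow> complex^'n^'m" where
  "cscale c A = (\<chi> i j. c * A $ i $ j)"

definition adjoint_mat :: "complex^'n^'m \<Rightarrow> complex^'m^'n" where
  "adjoint_mat A = (\<chi> i j. cnj (A $ j $ i))"

definition hermitian_mat :: "complex^'n^'n \<Rightarrow> bool" where
  "hermitian_mat A \<longleftrightarrow> adjoint_mat A = A"

definition unitary_mat :: "complex^'n^'n \<Rightarrow> bool" where
  "unitary_mat U \<longleftrightarrow> adjoint_mat U ** U = mat 1 \<and> U ** adjoint_mat U = mat 1"

definition diag_mat :: "('n \<Rightarrow> complex) \<Rightarrow> complex^'n^'n" where
  "diag_mat d = (\<chi> i j. if i = j then d i else 0)"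

definition mat_pow :: "complex^'n^'n \<Rightarrow> nat \<Rightarrow> complex^'n^'n" where
  "mat_pow A k = ((\<lambda>B. A ** B) ^^ k) (mat 1)"

definition mat_exp :: "complex^'n^'n \<Rightarrow> complex^'n^'n" where
  "mat_exp A = (\<Sum>k. (1 / fact k) *\<^sub>R mat_pow A k)"

definition laplace :: "(real \<Rightarrow> complex) \<Rightarrow> complex \<Rightarrow> complex" where
  "laplace f z = integral {0..} (\<lambda>t. exp (- (z * of_real t)) * f t)"

definition laplace_mat :: "(real \<Rightarrow> complex^'n^'n) \<Rightarrow> complex \<Rightarrow> complex^'n^'n" where
  "laplace_mat F z = integral {0..} (\<lambda>t. cscale (exp (- (z * of_real t))) (F t))"

end

(*
  Conjugating by the unitary U that diagonalises H_S = H0 + lam^2 H2 decouples the matrix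
  Volterra equation: the entries x of row a of U^* V(t) solve the scalar equation
  x'(t) = - lam^2 * int_0^t k(t - s) x(s) ds with kernel k(t) = G(t) exp(i E_a t).
  Laplace transforming it (the transform of a causal convolution is the product of the
  transforms, and a function that is integrable on [0, oo) and has a limit at oo tends to 0)
  gives (q + lam^2 k~(q)) x~(q) = x(0) with k~(q) = G~(q - i E_a); the time change
  W(t) = V(t / lam^2) turns q into lam^2 p. Hence U^* W~(p) = diag(1 / (p + G~(-i E_a + lam^2 p))) U^*,
  and no denominator vanishes because U^* has no zero row.
*)
theory Submission
  imports Defs
begin

section \<open>Integrals on a half-line\<close>

lemma continuous_absolutely_integrable_on_lborel:
  fixes h :: "real \<Rightarrow> 'a::euclidean_space"
  assumes S: "S \<in> sets borel" and h: "continuous_on S h" "h absolutely_integrable_on S"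
  shows "(\<lambda>s. indicator S s *\<^sub>R h s) \<in> borel_measurable lborel"
    and "integrable lborel (\<lambda>s. indicator S s *\<^sub>R h s)"
    and "(\<integral>s. indicator S s *\<^sub>R h s \<partial>lborel) = integral S h"
proof -
  show meas: "(\<lambda>s. indicator S s *\<^sub>R h s) \<in> borel_measurable lborel"
    using borel_measurable_continuous_on_indicator[OF S h(1)] by simp
  show "integrable lborel (\<lambda>s. indicator S s *\<^sub>R h s)"
    using h(2) integrable_completion[OF meas] by (simp add: set_integrable_def)
  have "integral S h = (LINT x:S|lebesgue. h x)"
    using set_lebesgue_integral_eq_integral(2)[OF h(2)] by simp
  then show "(\<integral>s. indicator S s *\<^sub>R h s \<partial>lborel) = integral S h"
    unfolding set_lebesgue_integral_def using integral_completion[OF meas] by simp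
qed

lemma tendsto_integral_Icc_at_top:
  fixes f :: "real \<Rightarrow> 'a::euclidean_space"
  assumes "f absolutely_integrable_on {a..}"
  shows "((\<lambda>b. integral {a..b} f) \<longlongrightarrow> integral {a..} f) at_top"
proof -
  have "((\<lambda>b. LINT x:{a..b}|lebesgue. f x) \<longlongrightarrow> integral {a..} f) at_top"
    using tendsto_set_lebesgue_integral_at_top[OF _ assms]
    by (simp add: set_lebesgue_integral_eq_integral(2)[OF assms])
  moreover have "f absolutely_integrable_on {a..b}" for b
    by (rule set_integrable_subset[OF assms]) auto
  then have "eventually (\<lambda>b. (LINT x:{a..b}|lebesgue. f x) = integral {a..b} f) at_top"
    by (simp add: set_lebesgue_integral_eq_integral)
  ultimately show ?thesis
    by (rule Lim_transform_eventually)
qed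

lemma absolutely_integrable_limit_at_top:
  fixes f :: "real \<Rightarrow> 'a::euclidean_space"
  assumes int: "f absolutely_integrable_on {a..}" and lim: "(f \<longlongrightarrow> L) at_top"
  shows "L = 0"
proof (rule ccontr)
  assume "L \<noteq> 0"
  then have "norm L / 2 < norm L" by simp
  with tendsto_norm[OF lim] have "eventually (\<lambda>x. norm L / 2 < norm (f x)) at_top"
    by (rule order_tendstoD)
  then obtain T where T: "\<And>x. x \<ge> T \<Longrightarrow> norm L / 2 < norm (f x)"
    by (auto simp: eventually_at_top_linorder)
  define B where "B = integral {a..} (\<lambda>x. norm (f x))"
  define c where "c = max T a"
  define d where "d = c + 2 * \<bar>B\<bar> / norm L + 1"
  have "c \<le> d"
    by (simp add: d_def)
  have norm_int: "(\<lambda>x. norm (f x)) integrable_on {a..}"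
    using int absolutely_integrable_on_def by blast
  have norm_int_cd: "(\<lambda>x. norm (f x)) integrable_on {c..d}"
    using set_integrable_subset[OF int, of "{c..d}"] absolutely_integrable_on_def
    by (auto simp: c_def)
  then have "(d - c) * (norm L / 2) \<le> integral {c..d} (\<lambda>x. norm (f x))"
    using integral_le[of "\<lambda>x. norm L / 2" "{c..d}" "\<lambda>x. norm (f x)"] T \<open>c \<le> d\<close>
    by (auto simp: c_def less_imp_le)
  also have "\<dots> \<le> B"
    unfolding B_def
    by (rule integral_subset_le) (use norm_int_cd norm_int in \<open>auto simp: c_def\<close>)
  finally have "(d - c) * (norm L / 2) \<le> B" .
  moreover have "(d - c) * (norm L / 2) = \<bar>B\<bar> + norm L / 2"
    using \<open>L \<noteq> 0\<close> by (simp add: d_def field_simps)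
  moreover have "B \<le> \<bar>B\<bar>" "norm L > 0"
    using \<open>L \<noteq> 0\<close> by auto
  ultimately show False
    by linarith
qed

lemma integral_Ici_vector_derivative:
  fixes f f' :: "real \<Rightarrow> 'a::euclidean_space"
  assumes deriv: "\<And>t. t \<ge> a \<Longrightarrow> (f has_vector_derivative f' t) (at t within {a..})"
    and f: "f absolutely_integrable_on {a..}" and f': "f' absolutely_integrable_on {a..}"
  shows "integral {a..} f' = - f a"
proof -
  have ftc: "f b = f a + integral {a..b} f'" if "a \<le> b" for b
  proof -
    have "(f' has_integral (f b - f a)) {a..b}"
      by (rule fundamental_theorem_of_calculus[OF that])
        (auto intro: has_vector_derivative_within_subset[OF deriv])
    then show ?thesis
      by (simp add: integral_unique)
  qed
  have "eventually (\<lambda>b. f a + integral {a..b} f' = f b) at_top"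
    using eventually_ge_at_top[of a] by eventually_elim (metis ftc)
  with tendsto_add[OF tendsto_const tendsto_integral_Icc_at_top[OF f']]
  have "(f \<longlongrightarrow> f a + integral {a..} f') at_top"
    by (rule Lim_transform_eventually)
  from absolutely_integrable_limit_at_top[OF f this] show ?thesis
    by (simp add: add_eq_0_iff)
qed

lemma integral_Ici_rescale:
  fixes f :: "real \<Rightarrow> 'a::euclidean_space"
  assumes c: "c > 0" and f: "f absolutely_integrable_on {0..}"
  shows "(\<lambda>u. f (c * u)) absolutely_integrable_on {0..}"
    and "integral {0..} f = c *\<^sub>R integral {0..} (\<lambda>u. f (c * u))"
proof -
  define F where "F = (\<lambda>x. indicator {0..} x *\<^sub>R f x)"
  have F: "integrable lebesgue F"
    using f by (simp add: set_integrable_def F_def)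
  have F_scaled: "F (c * u) = indicator {0..} u *\<^sub>R f (c * u)" for u
    using c by (auto simp: F_def indicator_def zero_le_mult_iff)
  have "integrable lebesgue (\<lambda>u. F (c * u))"
    using lebesgue_integrable_real_affine[OF F, of c 0] c by simp
  then show scaled: "(\<lambda>u. f (c * u)) absolutely_integrable_on {0..}"
    unfolding F_scaled by (simp add: set_integrable_def)
  have "integral {0..} f = (\<integral>x. F x \<partial>lebesgue)"
    using set_lebesgue_integral_eq_integral(2)[OF f] by (simp add: set_lebesgue_integral_def F_def)
  also have "\<dots> = c *\<^sub>R (\<integral>u. F (c * u) \<partial>lebesgue)"
    using lebesgue_integral_real_affine[of c F 0] c by simp
  also have "\<dots> = c *\<^sub>R integral {0..} (\<lambda>u. f (c * u))"
    using set_lebesgue_integral_eq_integral(2)[OF scaled]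
    by (simp add: F_scaled set_lebesgue_integral_def)
  finally show "integral {0..} f = c *\<^sub>R integral {0..} (\<lambda>u. f (c * u))" .
qed

lemma has_bochner_integral_convolution_lborel:
  fixes f g :: "real \<Rightarrow> 'a::{real_normed_field, banach, second_countable_topology}"
  assumes [measurable]: "f \<in> borel_measurable lborel" "g \<in> borel_measurable lborel"
    and f: "integrable lborel f" and g: "integrable lborel g"
  shows "has_bochner_integral lborel (\<lambda>t. \<integral>s. g (t - s) * f s \<partial>lborel)
           ((\<integral>x. g x \<partial>lborel) * (\<integral>x. f x \<partial>lborel))"
proof -
  have P: "pair_sigma_finite lborel lborel"
    by (simp add: pair_sigma_finite_def lborel.sigma_finite_measure_axioms)
  have shift: "(\<integral>t. h (t - s) \<partial>lborel) = (\<integral>t. h t \<partial>lborel)"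
    for h :: "real \<Rightarrow> 'z::{banach, second_countable_topology}" and s
    using lborel_integral_real_affine[of 1 h "-s"] by simp
  have "integrable (lborel \<Otimes>\<^sub>M lborel) (\<lambda>(s, t). g (t - s) * f s)"
  proof (rule pair_sigma_finite.Fubini_integrable[OF P])
    have "(\<integral>t. norm (g (t - s) * f s) \<partial>lborel) = norm (f s) * (\<integral>t. norm (g t) \<partial>lborel)"
      for s
      using shift[of "\<lambda>t. norm (g t)" s] by (simp add: norm_mult mult.commute)
    then show "integrable lborel
        (\<lambda>s. \<integral>t. norm (case (s, t) of (s, t) \<Rightarrow> g (t - s) * f s) \<partial>lborel)"
      using f by (simp add: integrable_norm)
    show "AE s in lborel. integrable lborel (\<lambda>t. case (s, t) of (s, t) \<Rightarrow> g (t - s) * f s)"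
    proof (rule AE_I2)
      fix s
      have "integrable lborel (\<lambda>t. g (t - s))"
        using lborel_integrable_real_affine[OF g, of 1 "- s"] by simp
      then show "integrable lborel (\<lambda>t. case (s, t) of (s, t) \<Rightarrow> g (t - s) * f s)"
        by simp
    qed
  qed measurable
  then have "integrable (lborel \<Otimes>\<^sub>M lborel) (case_prod (\<lambda>s t. g (t - s) * f s))"
    by simp
  from pair_sigma_finite.integrable_snd[OF P this] pair_sigma_finite.Fubini_integral[OF P this] show ?thesis
    by (simp add: has_bochner_integral_iff shift)
qed

lemma convolution_Ici:
  fixes f g :: "real \<Rightarrow> 'a::{real_normed_field, euclidean_space}"
  assumes f: "continuous_on {0..} f" "f absolutely_integrable_on {0..}"
    and g: "continuous_on {0..} g" "g absolutely_integrable_on {0..}"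
  shows "(\<lambda>t. integral {0..t} (\<lambda>s. g (t - s) * f s)) absolutely_integrable_on {0..}"
    and "integral {0..} (\<lambda>t. integral {0..t} (\<lambda>s. g (t - s) * f s))
           = integral {0..} g * integral {0..} f"
proof -
  define C where "C t = integral {0..t} (\<lambda>s. g (t - s) * f s)" for t
  define f0 where "f0 s = indicator {0..} s *\<^sub>R f s" for s
  define g0 where "g0 s = indicator {0..} s *\<^sub>R g s" for s
  have Ici: "{0::real..} \<in> sets borel"
    by simp
  note F = continuous_absolutely_integrable_on_lborel[OF Ici f, folded f0_def]
  note G = continuous_absolutely_integrable_on_lborel[OF Ici g, folded g0_def]
  have conv: "(\<integral>s. g0 (t - s) * f0 s \<partial>lborel) = indicator {0..} t *\<^sub>R C t" for t
  proof (cases "t \<ge> 0")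
    case True
    have "continuous_on {0..t} (\<lambda>s. g (t - s) * f s)"
      by (intro continuous_intros continuous_on_compose2[OF g(1)] continuous_on_subset[OF f(1)])
        auto
    then have "(LINT s:{0..t}|lborel. g (t - s) * f s) = C t"
      unfolding C_def by (intro set_borel_integral_eq_integral borel_integrable_atLeastAtMost')
    moreover have "g0 (t - s) * f0 s = indicator {0..t} s *\<^sub>R (g (t - s) * f s)" for s
      by (auto simp: f0_def g0_def indicator_def)
    ultimately show ?thesis
      using True by (simp add: set_lebesgue_integral_def)
  next
    case False
    then have "(\<lambda>s. g0 (t - s) * f0 s) = (\<lambda>s. 0)"
      by (auto simp: f0_def g0_def indicator_def)
    then show ?thesis
      using False by simp
  qed
  have "has_bochner_integral lborel (\<lambda>t. indicator {0..} t *\<^sub>R C t)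
          (integral {0..} g * integral {0..} f)"
    using has_bochner_integral_convolution_lborel[OF F(1) G(1) F(2) G(2)] F(3) G(3)
    by (simp add: conv)
  then have meas: "(\<lambda>t. indicator {0..} t *\<^sub>R C t) \<in> borel_measurable lborel"
    and int: "integrable lborel (\<lambda>t. indicator {0..} t *\<^sub>R C t)"
    and eq: "(\<integral>t. indicator {0..} t *\<^sub>R C t \<partial>lborel) = integral {0..} g * integral {0..} f"
    by (auto simp: has_bochner_integral_iff)
  show abs: "C absolutely_integrable_on {0..}"
    using integrable_completion[OF meas] int by (simp add: set_integrable_def)
  have "integral {0..} C = (\<integral>t. indicator {0..} t *\<^sub>R C t \<partial>lborel)"
    using set_lebesgue_integral_eq_integral(2)[OF abs] integral_completion[OF meas]
    by (simp add: set_lebesgue_integral_def)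
  with eq show "integral {0..} C = integral {0..} g * integral {0..} f"
    by simp
qed

section \<open>Laplace transform of a Volterra integro-differential equation\<close>

lemma has_vector_derivative_exp_weighted_volterra:
  fixes x k :: "real \<Rightarrow> complex" and c :: real and q :: complex
  assumes x': "(x has_vector_derivative (- c) *\<^sub>R integral {0..t} (\<lambda>s. k (t - s) * x s))
      (at t within {0..})"
  defines "e \<equiv> \<lambda>t::real. exp (- (q * t))"
  shows "((\<lambda>t. e t * x t) has_vector_derivative
           - q * (e t * x t) - c * integral {0..t} (\<lambda>s. e (t - s) * k (t - s) * (e s * x s)))
         (at t within {0..})"
proof -
  have "((\<lambda>z. exp (- (q * z))) has_field_derivative - q * e t) (at (of_real t))"
    unfolding e_def by (auto intro!: derivative_eq_intros)
  then have e': "(e has_vector_derivative - q * e t) (at t within {0..})"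
    unfolding e_def by (rule has_vector_derivative_at_within[OF has_vector_derivative_real_field])
  have "e (t - s) * e s = e t" for s
    unfolding e_def by (simp add: exp_add[symmetric] algebra_simps)
  then have factor: "e (t - s) * k (t - s) * (e s * x s) = e t * (k (t - s) * x s)" for s
    by (metis mult.assoc mult.left_commute)
  have "integral {0..t} (\<lambda>s. e (t - s) * k (t - s) * (e s * x s))
      = e t * integral {0..t} (\<lambda>s. k (t - s) * x s)"
    unfolding factor by simp
  then show ?thesis
    using has_vector_derivative_mult[OF e' x'] by (simp add: scaleR_conv_of_real algebra_simps)
qed

lemma laplace_volterra_integro_differential:
  fixes x k :: "real \<Rightarrow> complex" and c :: real and q :: complex
  assumes k: "continuous_on {0..} k"
    and x': "\<And>t. t \<ge> 0 \<Longrightarrow> (x has_vector_derivative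
               (- c) *\<^sub>R integral {0..t} (\<lambda>s. k (t - s) * x s)) (at t within {0..})"
    and k_conv: "(\<lambda>t. exp (- (q * t)) * k t) absolutely_integrable_on {0..}"
    and x_conv: "(\<lambda>t. exp (- (q * t)) * x t) absolutely_integrable_on {0..}"
  shows "(q + c * laplace k q) * laplace x q = x 0"
proof -
  define f where "f = (\<lambda>t::real. exp (- (q * t)) * x t)"
  define g where "g = (\<lambda>t::real. exp (- (q * t)) * k t)"
  define C where "C t = integral {0..t} (\<lambda>s. g (t - s) * f s)" for t
  have f': "(f has_vector_derivative - q * f t - c * C t) (at t within {0..})" if "t \<ge> 0" for t
    using has_vector_derivative_exp_weighted_volterra[OF x'[OF that]]
    unfolding f_def g_def C_def by (simp add: mult.assoc)
  have "continuous_on {0..} x"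
    unfolding continuous_on_eq_continuous_within
    using has_vector_derivative_continuous[OF x'] by auto
  then have f: "continuous_on {0..} f" and g: "continuous_on {0..} g"
    unfolding f_def g_def using k by (auto intro!: continuous_intros)
  have f_abs: "f absolutely_integrable_on {0..}" and g_abs: "g absolutely_integrable_on {0..}"
    using x_conv k_conv by (simp_all add: f_def g_def)
  note conv = convolution_Ici[OF f f_abs g g_abs, folded C_def]
  have "(\<lambda>t. - q * f t - c * C t) absolutely_integrable_on {0..}"
    by (intro set_integral_diff(1) set_integrable_mult_right[OF f_abs] set_integrable_mult_right[OF conv(1)])
  then have "integral {0..} (\<lambda>t. - q * f t - c * C t) = - f 0"
    by (intro integral_Ici_vector_derivative f' f_abs)
  moreover have "integral {0..} (\<lambda>t. - q * f t - c * C t) = - q * integral {0..} f - c * integral {0..} C"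
    using integral_diff[OF integrable_on_mult_right integrable_on_mult_right,
        OF set_lebesgue_integral_eq_integral(1)[OF f_abs] set_lebesgue_integral_eq_integral(1)[OF conv(1)],
        of "- q" "of_real c"]
    by simp
  ultimately show ?thesis
    using conv(2) by (simp add: laplace_def f_def g_def algebra_simps)
qed

lemma laplace_rescale:
  fixes x :: "real \<Rightarrow> complex" and c :: real and p :: complex
  assumes c: "c > 0" and conv: "(\<lambda>t. exp (- (p * t)) * x (t / c)) absolutely_integrable_on {0..}"
  shows "(\<lambda>t. exp (- (c * p * t)) * x t) absolutely_integrable_on {0..}"
    and "laplace (\<lambda>t. x (t / c)) p = c * laplace x (c * p)"
proof -
  have scaled: "(\<lambda>u. exp (- (p * (c * u))) * x (c * u / c)) = (\<lambda>u. exp (- (c * p * u)) * x u)"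
    using c by (simp add: fun_eq_iff mult_ac)
  show "(\<lambda>t. exp (- (c * p * t)) * x t) absolutely_integrable_on {0..}"
    using integral_Ici_rescale(1)[OF c conv] unfolding scaled .
  show "laplace (\<lambda>t. x (t / c)) p = c * laplace x (c * p)"
    using integral_Ici_rescale(2)[OF c conv] unfolding scaled laplace_def
    by (simp add: scaleR_conv_of_real)
qed

section \<open>Matrices conjugate to diagonal ones\<close>

lemma bounded_linear_matrix_mult_left:
  "bounded_linear (\<lambda>M::'a::{euclidean_space, real_algebra_1}^'n^'m. A ** M)"
proof -
  have "linear (\<lambda>M::'a^'n^'m. A ** M)"
    by (rule linearI) (simp_all add: matrix_add_ldistrib matrix_scalar_ac scalar_matrix_assoc[symmetric])
  then show ?thesis
    by (simp add: linear_conv_bounded_linear)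
qed

lemma bounded_linear_matrix_mult_right:
  "bounded_linear (\<lambda>M::'a::{euclidean_space, real_algebra_1}^'n^'m. M ** B)"
proof -
  have "linear (\<lambda>M::'a^'n^'m. M ** B)"
    by (rule linearI)
      (simp_all add: vec_eq_iff matrix_matrix_mult_def sum.distrib distrib_right scaleR_sum_right)
  then show ?thesis
    by (simp add: linear_conv_bounded_linear)
qed

lemma bounded_linear_matrix_mult_nth:
  "bounded_linear (\<lambda>M::'a::{euclidean_space, real_algebra_1}^'n^'m. (A ** M) $ i $ j)"
  using bounded_linear_compose[OF bounded_linear_vec_nth
      bounded_linear_compose[OF bounded_linear_vec_nth bounded_linear_matrix_mult_left]] .

lemma matrix_mult_cscale: "A ** cscale c B = cscale c (A ** B)"
  by (simp add: vec_eq_iff cscale_def matrix_matrix_mult_def sum_distrib_left mult_ac)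

lemma diag_mat_mult_nth: "(diag_mat d ** M) $ i $ j = d i * M $ i $ j"
  by (simp add: matrix_matrix_mult_def diag_mat_def if_distrib if_distribR cong: if_cong)

lemma diag_mat_sandwich_nth:
  "(U ** diag_mat d ** V) $ i $ j = (\<Sum>a\<in>UNIV. U $ i $ a * d a * V $ a $ j)"
  by (simp add: matrix_matrix_mult_def diag_mat_def if_distrib if_distribR sum_distrib_right
      cong: if_cong)

lemma cscale_diag_mat_sandwich:
  "cscale z (U ** diag_mat d ** V) = U ** diag_mat (\<lambda>a. z * d a) ** V"
  by (simp add: vec_eq_iff cscale_def diag_mat_sandwich_nth sum_distrib_left mult_ac)

lemma mat_pow_0 [simp]: "mat_pow A 0 = mat 1"
  by (simp add: mat_pow_def)

lemma mat_pow_Suc [simp]: "mat_pow A (Suc k) = A ** mat_pow A k"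
  by (simp add: mat_pow_def)

lemma diag_mat_mult_diag_mat: "diag_mat d ** diag_mat e = diag_mat (\<lambda>a. d a * e a)"
  by (simp add: vec_eq_iff diag_mat_mult_nth) (simp add: diag_mat_def)

lemma mat_pow_sandwich:
  assumes "V ** U = mat 1" "U ** V = mat 1"
  shows "mat_pow (U ** A ** V) k = U ** mat_pow A k ** V"
proof (induction k)
  case 0
  then show ?case
    using assms by simp
next
  case (Suc k)
  have "U ** A ** V ** (U ** mat_pow A k ** V) = U ** A ** (V ** U) ** mat_pow A k ** V"
    by (simp add: matrix_mul_assoc)
  with Suc show ?case
    using assms by (simp add: matrix_mul_assoc)
qed

lemma mat_pow_diag_mat: "mat_pow (diag_mat d) k = diag_mat (\<lambda>a. d a ^ k)"
proof (induction k)
  case 0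
  then show ?case
    by (simp add: vec_eq_iff diag_mat_def mat_def)
qed (simp add: diag_mat_mult_diag_mat)

lemma sums_mat_exp_diag_mat:
  "(\<lambda>k. (1 / fact k) *\<^sub>R mat_pow (diag_mat d) k) sums diag_mat (\<lambda>a. exp (d a))"
proof -
  have "(\<Sum>k<n. (1 / fact k) *\<^sub>R mat_pow (diag_mat d) k)
      = diag_mat (\<lambda>a. \<Sum>k<n. d a ^ k /\<^sub>R fact k)" for n
    unfolding mat_pow_diag_mat by (simp add: vec_eq_iff diag_mat_def inverse_eq_divide)
  moreover have "(\<lambda>n. diag_mat (\<lambda>a. \<Sum>k<n. d a ^ k /\<^sub>R fact k))
      \<longlonglongrightarrow> diag_mat (\<lambda>a. exp (d a))"
    using exp_converges unfolding diag_mat_def sums_def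
    by (auto intro!: tendsto_vec_lambda)
  ultimately show ?thesis
    by (simp add: sums_def)
qed

lemma mat_exp_sandwich:
  assumes "V ** U = mat 1" "U ** V = mat 1"
    and "(\<lambda>k. (1 / fact k) *\<^sub>R mat_pow A k) sums S"
  shows "mat_exp (U ** A ** V) = U ** S ** V"
proof -
  have "(\<lambda>k. U ** ((1 / fact k) *\<^sub>R mat_pow A k) ** V) sums (U ** S ** V)"
    using bounded_linear.sums[OF bounded_linear_compose[OF bounded_linear_matrix_mult_right
          bounded_linear_matrix_mult_left] assms(3)] .
  then show ?thesis
    unfolding mat_exp_def mat_pow_sandwich[OF assms(1,2)]
    by (simp add: sums_iff matrix_scalar_ac scalar_matrix_assoc)
qed

lemma continuous_on_matrix_mult [continuous_intros]:
  fixes A :: "'a::topological_space \<Rightarrow> 'b::real_normed_algebra_1^'n^'m"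
  assumes "continuous_on S A" "continuous_on S B"
  shows "continuous_on S (\<lambda>s. A s ** B s)"
  unfolding matrix_matrix_mult_def by (intro continuous_intros assms)

lemma continuous_on_cscale [continuous_intros]:
  assumes "continuous_on S f" "continuous_on S A"
  shows "continuous_on S (\<lambda>s. cscale (f s) (A s))"
  unfolding cscale_def by (intro continuous_intros assms)

lemma continuous_on_diag_mat [continuous_intros]:
  assumes "\<And>a. continuous_on S (\<lambda>s. d s a)"
  shows "continuous_on S (\<lambda>s. diag_mat (d s))"
proof -
  have "continuous_on S (\<lambda>s. if a = b then d s a else 0)" for a b
    by (cases "a = b") (simp_all add: assms)
  then show ?thesis
    unfolding diag_mat_def by (intro continuous_on_vec_lambda)
qed

section \<open>Reduction to scalar equations\<close>

lemma laplace_mat_nth: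
  fixes F :: "real \<Rightarrow> complex^'n^'n" and p :: complex
  assumes conv: "(\<lambda>t. cscale (exp (- (p * of_real t))) (F t)) absolutely_integrable_on {0..}"
  shows "(\<lambda>t. exp (- (p * of_real t)) * (A ** F t) $ i $ j) absolutely_integrable_on {0..}"
    and "(A ** laplace_mat F p) $ i $ j = laplace (\<lambda>t. (A ** F t) $ i $ j) p"
proof -
  note L = bounded_linear_matrix_mult_nth[of A i j]
  have nth: "(A ** cscale (exp (- (p * of_real t))) (F t)) $ i $ j
      = exp (- (p * of_real t)) * (A ** F t) $ i $ j" for t
    unfolding matrix_mult_cscale by (simp add: cscale_def)
  show "(\<lambda>t. exp (- (p * of_real t)) * (A ** F t) $ i $ j) absolutely_integrable_on {0..}"
    using absolutely_integrable_linear[OF conv L] by (simp add: comp_def nth)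
  have "(A ** laplace_mat F p) $ i $ j
      = integral {0..} (\<lambda>t. (A ** cscale (exp (- (p * of_real t))) (F t)) $ i $ j)"
    unfolding laplace_mat_def
    using integral_linear[OF set_lebesgue_integral_eq_integral(1)[OF conv] L]
    by (simp add: comp_def)
  then show "(A ** laplace_mat F p) $ i $ j = laplace (\<lambda>t. (A ** F t) $ i $ j) p"
    by (simp add: nth laplace_def)
qed

lemma unitary_diag_mat_solve:
  assumes U: "unitary_mat U"
    and eq: "\<And>a j. d a * (adjoint_mat U ** L) $ a $ j = adjoint_mat U $ a $ j"
  shows "(\<forall>a. d a \<noteq> 0) \<and> L = U ** diag_mat (\<lambda>a. 1 / d a) ** adjoint_mat U"
proof -
  have UaU: "adjoint_mat U ** U = mat 1" and UUa: "U ** adjoint_mat U = mat 1"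
    using U by (simp_all add: unitary_mat_def)
  have nz: "d a \<noteq> 0" for a
  proof
    assume "d a = 0"
    with eq have "adjoint_mat U $ a $ j = 0" for j
      by (metis mult_zero_left)
    then have "(adjoint_mat U ** U) $ a $ a = 0"
      by (simp add: matrix_matrix_mult_def)
    with UaU show False
      by (simp add: mat_def)
  qed
  have "adjoint_mat U ** L = diag_mat (\<lambda>a. 1 / d a) ** adjoint_mat U"
    using eq nz by (simp add: vec_eq_iff diag_mat_mult_nth field_simps)
  then have "U ** (adjoint_mat U ** L) = U ** diag_mat (\<lambda>a. 1 / d a) ** adjoint_mat U"
    by (simp add: matrix_mul_assoc)
  with nz UUa show ?thesis
    by (simp add: matrix_mul_assoc)
qed

lemma volterra_diagonalized_nth:
  fixes G :: "real \<Rightarrow> complex" and V :: "real \<Rightarrow> complex^'n^'n"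
  assumes U: "unitary_mat U" and G: "continuous_on {0..} G"
    and V': "\<And>t. t \<ge> 0 \<Longrightarrow> (V has_vector_derivative
        (- c) *\<^sub>R integral {0..t} (\<lambda>s. cscale (G (t - s))
           (mat_exp (cscale (\<i> * of_real (t - s)) (U ** diag_mat d ** adjoint_mat U)) ** V s)))
        (at t within {0..})"
    and t: "t \<ge> 0"
  shows "((\<lambda>t. (adjoint_mat U ** V t) $ a $ j) has_vector_derivative
           (- c) *\<^sub>R integral {0..t}
             (\<lambda>s. G (t - s) * exp (\<i> * of_real (t - s) * d a) * (adjoint_mat U ** V s) $ a $ j))
         (at t within {0..})"
proof -
  have UaU: "adjoint_mat U ** U = mat 1" and UUa: "U ** adjoint_mat U = mat 1"
    using U by (simp_all add: unitary_mat_def)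
  define D where "D \<tau> = diag_mat (\<lambda>b. exp (\<i> * of_real \<tau> * d b))" for \<tau> :: real
  define \<Phi> where "\<Phi> = (\<lambda>s. cscale (G (t - s)) (U ** D (t - s) ** adjoint_mat U ** V s))"
  have exp_eq: "mat_exp (cscale (\<i> * of_real \<tau>) (U ** diag_mat d ** adjoint_mat U))
      = U ** D \<tau> ** adjoint_mat U" for \<tau>
    unfolding cscale_diag_mat_sandwich D_def
    by (rule mat_exp_sandwich[OF UaU UUa sums_mat_exp_diag_mat])
  have V'_\<Phi>: "(V has_vector_derivative (- c) *\<^sub>R integral {0..t} \<Phi>) (at t within {0..})"
    using V'[OF t] unfolding exp_eq \<Phi>_def .
  have "continuous_on {0..} V"
    unfolding continuous_on_eq_continuous_within
    using has_vector_derivative_continuous[OF V'] by auto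
  then have "continuous_on {0..t} V"
    by (rule continuous_on_subset) auto
  moreover have "continuous_on {0..t} (\<lambda>s. G (t - s))"
    by (rule continuous_on_compose2[OF G]) (auto intro!: continuous_intros)
  ultimately have "continuous_on {0..t} \<Phi>"
    unfolding \<Phi>_def D_def by (intro continuous_intros)
  then have \<Phi>_int: "\<Phi> integrable_on {0..t}"
    by (rule integrable_continuous_interval)
  have \<Phi>_nth: "(adjoint_mat U ** \<Phi> s) $ a $ j
      = G (t - s) * exp (\<i> * of_real (t - s) * d a) * (adjoint_mat U ** V s) $ a $ j" for s
  proof -
    have "adjoint_mat U ** \<Phi> s
        = cscale (G (t - s)) ((adjoint_mat U ** U) ** D (t - s) ** (adjoint_mat U ** V s))"
      by (simp add: \<Phi>_def matrix_mult_cscale matrix_mul_assoc)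
    then show ?thesis
      by (simp add: UaU cscale_def D_def diag_mat_mult_nth mult_ac)
  qed
  note L = bounded_linear_matrix_mult_nth[of "adjoint_mat U" a j]
  have "(adjoint_mat U ** ((- c) *\<^sub>R integral {0..t} \<Phi>)) $ a $ j
      = (- c) *\<^sub>R integral {0..t} (\<lambda>s. (adjoint_mat U ** \<Phi> s) $ a $ j)"
    using integral_linear[OF \<Phi>_int L] linear_cmul[OF bounded_linear.linear[OF L], of "- c"]
    by (simp add: comp_def)
  with bounded_linear.has_vector_derivative[OF L V'_\<Phi>] show ?thesis
    by (simp add: \<Phi>_nth)
qed

lemma laplace_volterra_diagonalized_nth:
  fixes G :: "real \<Rightarrow> complex" and V :: "real \<Rightarrow> complex^'n^'n" and c :: real and p :: complex
  assumes U: "unitary_mat U" and G: "continuous_on {0..} G" and c: "c > 0"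
    and V': "\<And>t. t \<ge> 0 \<Longrightarrow> (V has_vector_derivative
        (- c) *\<^sub>R integral {0..t} (\<lambda>s. cscale (G (t - s))
           (mat_exp (cscale (\<i> * of_real (t - s)) (U ** diag_mat d ** adjoint_mat U)) ** V s)))
        (at t within {0..})"
    and V_conv: "(\<lambda>t. cscale (exp (- (p * of_real t))) (V (t / c))) absolutely_integrable_on {0..}"
    and G_conv: "(\<lambda>t. exp (- ((c * p - \<i> * d a) * of_real t)) * G t) absolutely_integrable_on {0..}"
  shows "(p + laplace G (c * p - \<i> * d a)) * (adjoint_mat U ** laplace_mat (\<lambda>t. V (t / c)) p) $ a $ j
           = (adjoint_mat U ** V 0) $ a $ j"
proof -
  define k where "k = (\<lambda>t. G t * exp (\<i> * of_real t * d a))"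
  define x where "x = (\<lambda>t. (adjoint_mat U ** V t) $ a $ j)"
  have k_weight: "exp (- (c * p * t)) * k t = exp (- ((c * p - \<i> * d a) * t)) * G t" for t :: real
    by (simp add: k_def mult_exp_exp algebra_simps)
  have x_rescaled: "(\<lambda>t. exp (- (p * t)) * x (t / c)) absolutely_integrable_on {0..}"
    and L_nth: "(adjoint_mat U ** laplace_mat (\<lambda>t. V (t / c)) p) $ a $ j = laplace (\<lambda>t. x (t / c)) p"
    using laplace_mat_nth[OF V_conv, of "adjoint_mat U" a j] unfolding x_def by simp_all
  have "(c * p + c * laplace k (c * p)) * laplace x (c * p) = x 0"
  proof (rule laplace_volterra_integro_differential)
    show "continuous_on {0..} k"
      unfolding k_def by (intro continuous_intros G)
    show "(x has_vector_derivative (- c) *\<^sub>R integral {0..t} (\<lambda>s. k (t - s) * x s))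
            (at t within {0..})" if "t \<ge> 0" for t
      using volterra_diagonalized_nth[OF U G V' that] by (simp add: k_def x_def)
    show "(\<lambda>t. exp (- (c * p * t)) * k t) absolutely_integrable_on {0..}"
      using G_conv unfolding k_weight .
    show "(\<lambda>t. exp (- (c * p * t)) * x t) absolutely_integrable_on {0..}"
      using laplace_rescale(1)[OF c x_rescaled] .
  qed
  moreover have "laplace k (c * p) = laplace G (c * p - \<i> * d a)"
    by (simp only: laplace_def k_weight)
  moreover have "x 0 = (adjoint_mat U ** V 0) $ a $ j"
    by (simp add: x_def)
  ultimately show ?thesis
    using c by (simp add: L_nth laplace_rescale(2)[OF c x_rescaled] algebra_simps)
qed

theorem lemma2:
  fixes G :: "real \<Rightarrow> complex"
    and H0 H2 U :: "complex^'n^'n"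
    and lam :: real
    and V W :: "real \<Rightarrow> complex^'n^'n"
    and E :: "'n \<Rightarrow> real"
    and p :: complex
  assumes G_cont: "continuous_on {0..} G"
    and H0_herm: "hermitian_mat H0"
    and H2_herm: "hermitian_mat H2"
    and lam_pos: "lam > 0"
    and V_ode: "\<And>t. t \<ge> 0 \<Longrightarrow>
        (V has_vector_derivative
          (- (lam ^ 2)) *\<^sub>R integral {0..t}
             (\<lambda>s. cscale (G (t - s))
                     (mat_exp (cscale (\<i> * of_real (t - s)) (H0 + (lam ^ 2) *\<^sub>R H2)) ** V s)))
        (at t within {0..})"
    and V_init: "V 0 = mat 1"
    and W_def: "\<And>t. W t = V (t / lam ^ 2)"
    and U_unitary: "unitary_mat U"
    and diagonalization: "H0 + (lam ^ 2) *\<^sub>R H2 = U ** diag_mat (\<lambda>a. of_real (E a)) ** adjoint_mat U"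
    and W_conv: "(\<lambda>t. cscale (exp (- (p * of_real t))) (W t)) absolutely_integrable_on {0..}"
    and G_conv: "\<And>a. (\<lambda>t. exp (- ((- \<i> * of_real (E a) + of_real (lam ^ 2) * p) * of_real t)) * G t)
                        absolutely_integrable_on {0..}"
  shows "(\<forall>a. p + laplace G (- \<i> * of_real (E a) + of_real (lam ^ 2) * p) \<noteq> 0)
       \<and> laplace_mat W p
         = U ** diag_mat (\<lambda>a. 1 / (p + laplace G (- \<i> * of_real (E a) + of_real (lam ^ 2) * p)))
             ** adjoint_mat U"
proof (rule unitary_diag_mat_solve[OF U_unitary])
  fix a j
  have lam2: "lam ^ 2 > 0"
    using lam_pos by simp
  have W_eq: "W = (\<lambda>t. V (t / lam ^ 2))"
    by (simp add: fun_eq_iff W_def)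
  have shift: "- \<i> * of_real (E a) + of_real (lam ^ 2) * p = lam ^ 2 * p - \<i> * of_real (E a)"
    by simp
  show "(p + laplace G (- \<i> * of_real (E a) + of_real (lam ^ 2) * p))
      * (adjoint_mat U ** laplace_mat W p) $ a $ j = adjoint_mat U $ a $ j"
    using laplace_volterra_diagonalized_nth[OF U_unitary G_cont lam2 V_ode[unfolded diagonalization]
        W_conv[unfolded W_eq] G_conv[of a, unfolded shift]]
    by (simp add: shift W_eq V_init)
qed

end
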